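(* For the generalized coin-tossing process with parameter $p\in(0,1)$, $q=1-p$, and OPs of length $m=3$, the OP probability vector is $\mathbf p=(p^2,\,p^2q,\,p^2q,\,pq^2,\,pq^2,\,q^2)^\top$, and the long-run covariance matrix is $$\Sigma=\begin{pmatrix} p^2(1+2p-3p^2)&p^3q(1-3p)&p^3q(1-3p)&p^2q^2(1-3p)&p^2q^2(1-3p)&-3p^2q^2\\ p^3q(1-3p)&p^2q(1-3p^2q)&p^3q(1-3pq)&-3p^3q^3&p^2q^2(1-3pq)&p^2q^2(1-3q)\\ p^3q(1-3p)&p^3q(1-3pq)&p^2q(1-3p^2q)&p^2q^2(1-3pq)&-3p^3q^3&p^2q^2(1-3q)\\ p^2q^2(1-3p)&-3p^3q^3&p^2q^2(1-3pq)&pq^2(1-3pq^2)&pq^3(1-3pq)&pq^3(3p-2)\\ p^2q^2(1-3p)&p^2q^2(1-3pq)&-3p^3q^3&pq^3(1-3pq)&pq^2(1-3pq^2)&pq^3(3p-2)\\ -3p^2q^2&p^2q^2(1-3q)&p^2q^2(1-3q)&pq^3(3p-2)&pq^3(3p-2)&pq^2(4-3p) \end{pmatrix}.$$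
   Context: Generalized coin-tossing (GCT) process with parameter $p\in(0,1)$, $q=1-p$: a random strict total order on objects $(X_t)_{t\in\mathbb Z}$ defined from mutually independent Bernoulli variables $\xi_{s,t}$, $s<t$, with $\mathbb P(\xi_{s,t}=1)=p$, recursively in $t-s$: if $t-s=1$, $X_s<X_t$ iff $\xi_{s,t}=1$; if $t-s\ge2$ and there is $r\in(s,t)$ with $X_s<X_r<X_t$ then $X_s<X_t$; if there is $r\in(s,t)$ with $X_s>X_r>X_t$ then $X_s>X_t$; otherwise $X_s<X_t$ iff $\xi_{s,t}=1$. $\Pi_t$ is the permutation in $S_3$ giving the ranks of $(X_t,X_{t+1},X_{t+2})$; OPs in lexicographic order are $\pi_1=(1,2,3)$, $\pi_2=(1,3,2)$, $\pi_3=(2,1,3)$, $\pi_4=(2,3,1)$, $\pi_5=(3,1,2)$, $\pi_6=(3,2,1)$. $p_i=\mathbb P(\Pi_0=\pi_i)$, $p_{ij}(k)=\mathbb P(\Pi_0=\pi_i,\Pi_k=\pi_j)$, $\Sigma=(\sigma_{ij})$ with $\sigma_{ij}=p_i(\delta_{ij}-p_j)+\sum_{k=1}^\infty\big(p_{ij}(k)+p_{ji}(k)-2p_ip_j\big)$. *)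

theory Defs
  imports "HOL-Probability.Probability"
begin

definition gct_I :: "(int \<times> int) set" where
  "gct_I = {(s, t). s < t}"

text \<open>Underlying probability space: i.i.d. Bernoulli(p) variables xi_{s,t}, s<t
  (an outcome w assigns the value of xi_{s,t} = 1 to w (s,t)).\<close>
definition gct_M :: "real \<Rightarrow> ((int \<times> int) \<Rightarrow> bool) measure" where
  "gct_M p = PiM gct_I (\<lambda>_. measure_pmf (bernoulli_pmf p))"

text \<open>gct_ltd w d s t: for 0 < t - s <= d, whether X_s < X_t; defined by recursion
  on the distance t - s exactly as in the definition of the GCT process.\<close>
primrec gct_ltd :: "((int \<times> int) \<Rightarrow> bool) \<Rightarrow> nat \<Rightarrow> int \<Rightarrow> int \<Rightarrow> bool" where
  "gct_ltd w 0 s t = False"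
| "gct_ltd w (Suc d) s t =
     (if t - s < int (Suc d) then gct_ltd w d s t
      else if t - s > int (Suc d) then False
      else if d = 0 then w (s, t)
      else if (\<exists>r. s < r \<and> r < t \<and> gct_ltd w d s r \<and> gct_ltd w d r t) then True
      else if (\<exists>r. s < r \<and> r < t \<and> \<not> gct_ltd w d s r \<and> \<not> gct_ltd w d r t) then False
      else w (s, t))"

text \<open>The random strict total order: gct_less w s t  iff  X_s < X_t.\<close>
definition gct_less :: "((int \<times> int) \<Rightarrow> bool) \<Rightarrow> int \<Rightarrow> int \<Rightarrow> bool" where
  "gct_less w s t =
     (if s < t then gct_ltd w (nat (t - s)) s t
      else if t < s then \<not> gct_ltd w (nat (s - t)) t s
      else False)"

definition gct_rank :: "((int \<times> int) \<Rightarrow> bool) \<Rightarrow> int \<Rightarrow> nat \<Rightarrow> nat" where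
  "gct_rank w t j = Suc (card {i \<in> {0..2::nat}. gct_less w (t + int i) (t + int j)})"

definition gct_OP :: "((int \<times> int) \<Rightarrow> bool) \<Rightarrow> int \<Rightarrow> nat list" where
  "gct_OP w t = map (gct_rank w t) [0, 1, 2]"

definition OP_pat :: "nat \<Rightarrow> nat list" where
  "OP_pat i = [[1,2,3], [1,3,2], [2,1,3], [2,3,1], [3,1,2], [3,2,1]] ! (i - 1)"

definition gct_p :: "real \<Rightarrow> nat \<Rightarrow> real" where
  "gct_p p i = measure (gct_M p) {w \<in> space (gct_M p). gct_OP w 0 = OP_pat i}"

definition gct_pij :: "real \<Rightarrow> nat \<Rightarrow> nat \<Rightarrow> nat \<Rightarrow> real" where
  "gct_pij p i j k = measure (gct_M p)
     {w \<in> space (gct_M p). gct_OP w 0 = OP_pat i \<and> gct_OP w (int k) = OP_pat j}"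

definition claimed_pvec :: "real \<Rightarrow> nat \<Rightarrow> real" where
  "claimed_pvec p i = (let q = 1 - p in
     [p^2, p^2*q, p^2*q, p*q^2, p*q^2, q^2] ! (i - 1))"

definition claimed_Sigma :: "real \<Rightarrow> nat \<Rightarrow> nat \<Rightarrow> real" where
  "claimed_Sigma p i j = (let q = 1 - p in
     [[p^2*(1+2*p-3*p^2), p^3*q*(1-3*p), p^3*q*(1-3*p), p^2*q^2*(1-3*p), p^2*q^2*(1-3*p), -3*p^2*q^2],
      [p^3*q*(1-3*p), p^2*q*(1-3*p^2*q), p^3*q*(1-3*p*q), -3*p^3*q^3, p^2*q^2*(1-3*p*q), p^2*q^2*(1-3*q)],
      [p^3*q*(1-3*p), p^3*q*(1-3*p*q), p^2*q*(1-3*p^2*q), p^2*q^2*(1-3*p*q), -3*p^3*q^3, p^2*q^2*(1-3*q)],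
      [p^2*q^2*(1-3*p), -3*p^3*q^3, p^2*q^2*(1-3*p*q), p*q^2*(1-3*p*q^2), p*q^3*(1-3*p*q), p*q^3*(3*p-2)],
      [p^2*q^2*(1-3*p), p^2*q^2*(1-3*p*q), -3*p^3*q^3, p*q^3*(1-3*p*q), p*q^2*(1-3*p*q^2), p*q^3*(3*p-2)],
      [-3*p^2*q^2, p^2*q^2*(1-3*q), p^2*q^2*(1-3*q), p*q^3*(3*p-2), p*q^3*(3*p-2), p*q^2*(4-3*p)]]
     ! (i - 1) ! (j - 1))"

end

theory Submission
  imports Defs
begin

(* The pattern Pi_t depends only on the three coins xi_{t,t+1}, xi_{t+1,t+2} and xi_{t,t+2}:
   the order of X_t and X_{t+2} is forced when the two unit steps agree and is decided by
   xi_{t,t+2} otherwise.  Hence {Pi_t = pi_i} is a cylinder event and p_i is a product of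
   Bernoulli probabilities.  For k >= 2 the coin windows of Pi_0 and Pi_k are disjoint, so
   these patterns are independent and every term of the series beyond k = 1 vanishes; for
   k = 1 the windows share exactly xi_{1,2}, and Sigma is a finite computation. *)

lemma gct_less_Suc: "gct_less w t (t + 1) = w (t, t + 1)"
  by (simp add: gct_less_def)

lemma gct_less_add_2:
  "gct_less w t (t + 2) = (if w (t, t + 1) = w (t + 1, t + 2) then w (t, t + 1) else w (t, t + 2))"
proof -
  have ex_between: "(\<exists>r. t < r \<and> r < t + 2 \<and> P r) \<longleftrightarrow> P (t + 1)" for P
  proof
    assume "\<exists>r. t < r \<and> r < t + 2 \<and> P r"
    then obtain r where "t < r" "r < t + 2" "P r" by blast
    moreover from this have "r = t + 1" by linarith
    ultimately show "P (t + 1)" by simp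
  qed (intro exI[of _ "t + 1"], simp)
  have "gct_less w t (t + 2) = gct_ltd w (Suc (Suc 0)) t (t + 2)"
    by (simp add: gct_less_def numeral_2_eq_2 nat_add_distrib)
  then show ?thesis
    by (simp only: gct_ltd.simps ex_between) simp
qed

lemma gct_less_swap: "s < u \<Longrightarrow> gct_less w u s \<longleftrightarrow> \<not> gct_less w s u"
  by (simp add: gct_less_def)

lemma gct_less_irrefl: "\<not> gct_less w s s"
  by (simp add: gct_less_def)

lemma card_filter_atLeast0AtMost2:
  "card {i \<in> {0..2::nat}. P i} = of_bool (P 0) + of_bool (P 1) + of_bool (P 2)"
proof -
  have "card {i \<in> {0..2::nat}. P i} = (\<Sum>i\<in>{0..2::nat}. of_bool (P i))"
    unfolding card_eq_sum of_bool_def by (rule sum.inter_filter) simp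
  also have "\<dots> = of_bool (P 0) + of_bool (P 1) + of_bool (P 2)"
    by (simp add: atLeast0_atMost_Suc numeral_2_eq_2)
  finally show ?thesis .
qed

lemma gct_OP_eq:
  "gct_OP w t =
    (let a = w (t, t + 1); b = w (t + 1, t + 2); c = gct_less w t (t + 2)
     in [Suc (of_bool (\<not> a) + of_bool (\<not> c)), Suc (of_bool a + of_bool (\<not> b)),
         Suc (of_bool c + of_bool b)])"
proof -
  have less_12: "gct_less w (t + 1) (t + 2) = w (t + 1, t + 2)"
    using gct_less_Suc[of w "t + 1"] by (simp add: add.assoc)
  have less_10: "gct_less w (t + 1) t = (\<not> w (t, t + 1))"
    by (simp add: gct_less_swap gct_less_Suc)
  have less_21: "gct_less w (t + 2) (t + 1) = (\<not> w (t + 1, t + 2))"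
    by (simp add: gct_less_swap less_12)
  have less_20: "gct_less w (t + 2) t = (\<not> gct_less w t (t + 2))"
    by (simp add: gct_less_swap)
  show ?thesis
    unfolding gct_OP_def gct_rank_def card_filter_atLeast0AtMost2
    by (simp add: gct_less_irrefl gct_less_Suc less_12 less_10 less_21 less_20 Let_def)
qed

lemma OP_index_cases:
  assumes "i \<in> {1..6::nat}"
  obtains "i = 1" | "i = 2" | "i = 3" | "i = 4" | "i = 5" | "i = 6"
  using assms by force

(* Admissible values of xi_{t,t+1}, xi_{t+1,t+2}, xi_{t,t+2} for Pi_t = pi_i; UNIV means that
   pi_i does not depend on that coin. *)
definition OP_xi01 :: "nat \<Rightarrow> bool set" where
  "OP_xi01 i = [{True}, {True}, {False}, {True}, {False}, {False}] ! (i - 1)"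

definition OP_xi12 :: "nat \<Rightarrow> bool set" where
  "OP_xi12 i = [{True}, {False}, {True}, {False}, {True}, {False}] ! (i - 1)"

definition OP_xi02 :: "nat \<Rightarrow> bool set" where
  "OP_xi02 i = [UNIV, {True}, {True}, {False}, {False}, UNIV] ! (i - 1)"

lemma gct_OP_eq_OP_pat_iff:
  assumes "i \<in> {1..6}"
  shows "gct_OP w t = OP_pat i \<longleftrightarrow>
    w (t, t + 1) \<in> OP_xi01 i \<and> w (t + 1, t + 2) \<in> OP_xi12 i \<and> w (t, t + 2) \<in> OP_xi02 i"
  using assms unfolding gct_OP_eq gct_less_add_2
  by (cases rule: OP_index_cases; cases "w (t, t + 1)"; cases "w (t + 1, t + 2)"; cases "w (t, t + 2)")
    (simp_all add: OP_pat_def OP_xi01_def OP_xi12_def OP_xi02_def)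

abbreviation coin_prob :: "real \<Rightarrow> bool set \<Rightarrow> real" where
  "coin_prob p \<equiv> measure_pmf.prob (bernoulli_pmf p)"

lemma coin_prob_eq:
  assumes "0 \<le> p" "p \<le> 1"
  shows "coin_prob p S = (if True \<in> S then p else 0) + (if False \<in> S then 1 - p else 0)"
proof -
  have "coin_prob p S = (\<Sum>b\<in>S. pmf (bernoulli_pmf p) b)"
    by (simp add: measure_measure_pmf_finite)
  also have "\<dots> = (\<Sum>b\<in>UNIV. if b \<in> S then pmf (bernoulli_pmf p) b else 0)"
    by (simp add: sum.If_cases)
  finally show ?thesis
    using assms by (simp add: UNIV_bool)
qed

lemma gct_M_cylinder:
  assumes "finite J" "J \<subseteq> gct_I"
  shows "measure (gct_M p) {w \<in> space (gct_M p). \<forall>j\<in>J. w j \<in> X j} = (\<Prod>j\<in>J. coin_prob p (X j))"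
proof -
  interpret product_prob_space "\<lambda>_. measure_pmf (bernoulli_pmf p)" gct_I
    by unfold_locales
  have "emeasure (gct_M p) {w \<in> space (gct_M p). \<forall>j\<in>J. w j \<in> X j}
      = (\<Prod>j\<in>J. emeasure (bernoulli_pmf p) (X j))"
    unfolding gct_M_def by (rule emeasure_PiM_Collect) (use assms in auto)
  also have "\<dots> = ennreal (\<Prod>j\<in>J. coin_prob p (X j))"
    by (simp add: measure_pmf.emeasure_eq_measure prod_ennreal)
  finally show ?thesis
    by (simp add: measure_def prod_nonneg)
qed

lemma gct_M_cylinder_Un:
  assumes "finite J" "J \<subseteq> gct_I" "finite K" "K \<subseteq> gct_I"
  shows "measure (gct_M p) {w \<in> space (gct_M p). (\<forall>j\<in>J. w j \<in> X j) \<and> (\<forall>j\<in>K. w j \<in> Y j)}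
    = (\<Prod>j\<in>J \<union> K. coin_prob p ((if j \<in> J then X j else UNIV) \<inter> (if j \<in> K then Y j else UNIV)))"
proof -
  define Z where "Z j = (if j \<in> J then X j else UNIV) \<inter> (if j \<in> K then Y j else UNIV)" for j
  have "(\<forall>j\<in>J. w j \<in> X j) \<and> (\<forall>j\<in>K. w j \<in> Y j) \<longleftrightarrow> (\<forall>j\<in>J \<union> K. w j \<in> Z j)" for w
    by (auto simp: Z_def split: if_splits)
  then have "measure (gct_M p) {w \<in> space (gct_M p). (\<forall>j\<in>J. w j \<in> X j) \<and> (\<forall>j\<in>K. w j \<in> Y j)}
      = (\<Prod>j\<in>J \<union> K. coin_prob p (Z j))"
    using assms by (simp only:) (rule gct_M_cylinder, auto)
  then show ?thesis
    by (simp only: Z_def)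
qed

definition OP_window :: "int \<Rightarrow> (int \<times> int) set" where
  "OP_window t = {(t, t + 1), (t + 1, t + 2), (t, t + 2)}"

definition OP_constraint :: "nat \<Rightarrow> int \<Rightarrow> int \<times> int \<Rightarrow> bool set" where
  "OP_constraint i t u =
    (if u = (t, t + 1) then OP_xi01 i else if u = (t + 1, t + 2) then OP_xi12 i else OP_xi02 i)"

lemma finite_OP_window [simp]: "finite (OP_window t)"
  by (simp add: OP_window_def)

lemma OP_window_subset_gct_I: "OP_window t \<subseteq> gct_I"
  by (auto simp: OP_window_def gct_I_def)

lemma gct_OP_eq_OP_pat_window:
  "i \<in> {1..6} \<Longrightarrow> gct_OP w t = OP_pat i \<longleftrightarrow> (\<forall>u\<in>OP_window t. w u \<in> OP_constraint i t u)"
  by (simp add: gct_OP_eq_OP_pat_iff OP_window_def OP_constraint_def)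

lemma prod_OP_window:
  "(\<Prod>u\<in>OP_window t. f (OP_constraint i t u)) = f (OP_xi01 i) * f (OP_xi12 i) * f (OP_xi02 i)"
  by (simp add: OP_window_def OP_constraint_def mult.assoc)

lemma gct_p_eq:
  assumes "i \<in> {1..6}"
  shows "gct_p p i = coin_prob p (OP_xi01 i) * coin_prob p (OP_xi12 i) * coin_prob p (OP_xi02 i)"
  unfolding gct_p_def gct_OP_eq_OP_pat_window[OF assms]
  by (simp add: gct_M_cylinder OP_window_subset_gct_I prod_OP_window)

lemma gct_pij_eq:
  assumes "i \<in> {1..6}" "j \<in> {1..6}"
  shows "gct_pij p i j k = (\<Prod>u\<in>OP_window 0 \<union> OP_window (int k).
    coin_prob p ((if u \<in> OP_window 0 then OP_constraint i 0 u else UNIV)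
      \<inter> (if u \<in> OP_window (int k) then OP_constraint j (int k) u else UNIV)))"
  unfolding gct_pij_def gct_OP_eq_OP_pat_window[OF assms(1)] gct_OP_eq_OP_pat_window[OF assms(2)]
  by (simp add: gct_M_cylinder_Un OP_window_subset_gct_I)

lemma gct_pij_lag1:
  assumes "i \<in> {1..6}" "j \<in> {1..6}"
  shows "gct_pij p i j 1 = coin_prob p (OP_xi01 i) * coin_prob p (OP_xi02 i)
    * coin_prob p (OP_xi12 i \<inter> OP_xi01 j) * coin_prob p (OP_xi12 j) * coin_prob p (OP_xi02 j)"
proof -
  have "OP_window 0 \<union> OP_window (int 1) = {(0, 1), (0, 2), (1, 2), (2, 3), (1, 3)}"
    by (auto simp: OP_window_def)
  then show ?thesis
    unfolding gct_pij_eq[OF assms] by (simp add: OP_window_def OP_constraint_def mult_ac)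
qed

lemma gct_pij_indep:
  assumes "i \<in> {1..6}" "j \<in> {1..6}" "2 \<le> k"
  shows "gct_pij p i j k = gct_p p i * gct_p p j"
proof -
  have "OP_window 0 \<inter> OP_window (int k) = {}"
    using assms(3) by (auto simp: OP_window_def)
  then have "gct_pij p i j k = (\<Prod>u\<in>OP_window 0. coin_prob p (OP_constraint i 0 u))
      * (\<Prod>u\<in>OP_window (int k). coin_prob p (OP_constraint j (int k) u))"
    unfolding gct_pij_eq[OF assms(1,2)]
    by (auto simp: prod.union_disjoint intro!: arg_cong2[where f = "(*)"] prod.cong)
  then show ?thesis
    using assms by (simp add: prod_OP_window gct_p_eq)
qed

lemma gct_p_eq_claimed_pvec:
  assumes "0 \<le> p" "p \<le> 1" "i \<in> {1..6}"
  shows "gct_p p i = claimed_pvec p i"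
  using assms(3) unfolding gct_p_eq[OF assms(3)] coin_prob_eq[OF assms(1,2)]
  by (cases rule: OP_index_cases)
    (simp_all add: OP_xi01_def OP_xi12_def OP_xi02_def claimed_pvec_def Let_def power2_eq_square)

lemma gct_covariance_lag1:
  assumes "0 \<le> p" "p \<le> 1" "i \<in> {1..6}" "j \<in> {1..6}"
  shows "gct_pij p i j 1 + gct_pij p j i 1 - 2 * gct_p p i * gct_p p j
    = claimed_Sigma p i j - gct_p p i * ((if i = j then 1 else 0) - gct_p p j)"
  unfolding gct_pij_lag1[OF assms(3,4)] gct_pij_lag1[OF assms(4,3)] gct_p_eq[OF assms(3)]
    gct_p_eq[OF assms(4)] coin_prob_eq[OF assms(1,2)]
  using assms(3)
  by (cases rule: OP_index_cases; cases rule: OP_index_cases[OF assms(4)])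
    (simp_all add: OP_xi01_def OP_xi12_def OP_xi02_def claimed_Sigma_def Let_def
      algebra_simps power2_eq_square power3_eq_cube)

theorem proposition3p2:
  fixes p :: real
  assumes "0 < p" and "p < 1"
  shows "(\<forall>i\<in>{1..6}. gct_p p i = claimed_pvec p i) \<and>
         (\<forall>i\<in>{1..6}. \<forall>j\<in>{1..6}.
            (\<lambda>k. gct_pij p i j (Suc k) + gct_pij p j i (Suc k) - 2 * gct_p p i * gct_p p j)
              sums (claimed_Sigma p i j - gct_p p i * ((if i = j then 1 else 0) - gct_p p j)))"
proof -
  have p: "0 \<le> p" "p \<le> 1"
    using assms by simp_all
  have "(\<lambda>k. gct_pij p i j (Suc k) + gct_pij p j i (Suc k) - 2 * gct_p p i * gct_p p j)
      sums (claimed_Sigma p i j - gct_p p i * ((if i = j then 1 else 0) - gct_p p j))"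
    if ij: "i \<in> {1..6}" "j \<in> {1..6}" for i j
  proof -
    let ?F = "\<lambda>k. gct_pij p i j (Suc k) + gct_pij p j i (Suc k) - 2 * gct_p p i * gct_p p j"
    have "?F k = 0" if "k \<noteq> 0" for k
      using that ij by (simp add: gct_pij_indep)
    then have "?F sums (\<Sum>k\<in>{0}. ?F k)"
      by (intro sums_finite) auto
    then show ?thesis
      using gct_covariance_lag1[OF p ij] by simp
  qed
  then show ?thesis
    using gct_p_eq_claimed_pvec[OF p] by blast
qed

end
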